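(* Let $\mathcal{P}$ be a nonempty finite poset with $n=|\mathcal{P}|$, let $m=\max_{p\in\mathcal{P}}(|{\downarrow}p|+|{\uparrow}p|)$, and let $\mathcal{A},\mathcal{B}$ be dual families of downsets over $\mathcal{L}(\mathcal{P})$. Then $$\sum_{A\in\mathcal{A}}(3/4)^{|A|/m^2}+\sum_{B\in\mathcal{B}}e^{-(n-|B|)/m}\ \ge\ 1.$$
   Context: For a finite poset $\mathcal{P}$, $\mathcal{L}(\mathcal{P})$ is the lattice of all downsets of $\mathcal{P}$ ordered by inclusion. ${\downarrow}p=\{q:q\le p\}$, ${\uparrow}p=\{q:q\ge p\}$ (both contain $p$, so $m\ge2$). Two families $\mathcal{A},\mathcal{B}$ of downsets of $\mathcal{P}$ are dual over $\mathcal{L}(\mathcal{P})$ if $A\not\subseteq B$ for all $A\in\mathcal{A},B\in\mathcal{B}$, and for every downset $X$ of $\mathcal{P}$ either $X\subseteq B$ for some $B\in\mathcal{B}$ or $A\subseteq X$ for some $A\in\mathcal{A}$. *)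

theory Defs
  imports Complex_Main
begin

definition partial_order_on' :: "'a set \<Rightarrow> ('a \<Rightarrow> 'a \<Rightarrow> bool) \<Rightarrow> bool" where
  "partial_order_on' P le \<longleftrightarrow>
     (\<forall>x\<in>P. le x x) \<and>
     (\<forall>x\<in>P. \<forall>y\<in>P. le x y \<and> le y x \<longrightarrow> x = y) \<and>
     (\<forall>x\<in>P. \<forall>y\<in>P. \<forall>z\<in>P. le x y \<and> le y z \<longrightarrow> le x z)"

definition downset :: "'a set \<Rightarrow> ('a \<Rightarrow> 'a \<Rightarrow> bool) \<Rightarrow> 'a set \<Rightarrow> bool" where
  "downset P le D \<longleftrightarrow> D \<subseteq> P \<and> (\<forall>x\<in>D. \<forall>y\<in>P. le y x \<longrightarrow> y \<in> D)"

definition down :: "'a set \<Rightarrow> ('a \<Rightarrow> 'a \<Rightarrow> bool) \<Rightarrow> 'a \<Rightarrow> 'a set" where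
  "down P le p = {q\<in>P. le q p}"

definition up :: "'a set \<Rightarrow> ('a \<Rightarrow> 'a \<Rightarrow> bool) \<Rightarrow> 'a \<Rightarrow> 'a set" where
  "up P le p = {q\<in>P. le p q}"

definition dual_families :: "'a set \<Rightarrow> ('a \<Rightarrow> 'a \<Rightarrow> bool) \<Rightarrow> 'a set set \<Rightarrow> 'a set set \<Rightarrow> bool" where
  "dual_families P le \<A> \<B> \<longleftrightarrow>
     (\<forall>A\<in>\<A>. downset P le A) \<and> (\<forall>B\<in>\<B>. downset P le B) \<and>
     (\<forall>A\<in>\<A>. \<forall>B\<in>\<B>. \<not> A \<subseteq> B) \<and>
     (\<forall>X. downset P le X \<longrightarrow> (\<exists>B\<in>\<B>. X \<subseteq> B) \<or> (\<exists>A\<in>\<A>. A \<subseteq> X))"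

end

theory Submission
  imports Defs "HOL-Library.Disjoint_Sets"
begin

(* Let S be a random subset of P containing each element independently with probability 1/m,
   and let D be its down-closure. By duality either D is contained in some B of \<B> or D contains
   some A of \<A>, so by the union bound the probabilities of these events sum to at least 1.
   D \<subseteq> B forces S to avoid P - B, which has probability (1 - 1/m)^(n - |B|) \<le> e^(-(n - |B|)/m).
   For A \<subseteq> D, greedily pick A' \<subseteq> A with pairwise disjoint up-sets and |A| \<le> m^2 |A'|: S must
   meet each of these up-sets, independent events of probability 1 - (1 - 1/m)^|up a|, and
   |up a| < m makes this at most 1 - (1 - 1/m)^(m-1) \<le> 3/4. *)

text \<open>The probability that a random subset of T, containing each element independently with
  probability q, equals S.\<close>
definition subset_weight :: "real \<Rightarrow> 'a set \<Rightarrow> 'a set \<Rightarrow> real" where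
  "subset_weight q T S = q ^ card S * (1 - q) ^ card (T - S)"

definition subset_prob :: "real \<Rightarrow> 'a set \<Rightarrow> ('a set \<Rightarrow> bool) \<Rightarrow> real" where
  "subset_prob q T E = (\<Sum>S\<in>Pow T. if E S then subset_weight q T S else 0)"

lemma subset_weight_nonneg: "0 \<le> q \<Longrightarrow> q \<le> 1 \<Longrightarrow> 0 \<le> subset_weight q T S"
  unfolding subset_weight_def by simp

lemma sum_subset_weight:
  assumes "finite T"
  shows "(\<Sum>S\<in>Pow T. subset_weight q T S) = 1"
  using prod_add[OF assms, of "\<lambda>_. q" "\<lambda>_. 1 - q"] by (simp add: subset_weight_def)

lemma subset_prob_True: "finite T \<Longrightarrow> subset_prob q T (\<lambda>_. True) = 1"
  by (simp add: subset_prob_def sum_subset_weight)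

lemma subset_prob_cong:
  "(\<And>S. S \<subseteq> T \<Longrightarrow> E S \<longleftrightarrow> F S) \<Longrightarrow> subset_prob q T E = subset_prob q T F"
  unfolding subset_prob_def by (intro sum.cong) auto

lemma subset_prob_mono:
  assumes "0 \<le> q" "q \<le> 1" "\<And>S. S \<subseteq> T \<Longrightarrow> E S \<Longrightarrow> F S"
  shows "subset_prob q T E \<le> subset_prob q T F"
  unfolding subset_prob_def using assms by (intro sum_mono) (auto simp: subset_weight_nonneg)

lemma subset_prob_empty:
  assumes "finite T"
  shows "subset_prob q T (\<lambda>S. S = {}) = (1 - q) ^ card T"
  using assms by (simp add: subset_prob_def subset_weight_def)

lemma subset_prob_nonempty:
  assumes "finite T"
  shows "subset_prob q T (\<lambda>S. S \<noteq> {}) = 1 - (1 - q) ^ card T"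
proof -
  have "subset_prob q T (\<lambda>_. True) = subset_prob q T (\<lambda>S. S = {}) + subset_prob q T (\<lambda>S. S \<noteq> {})"
    unfolding subset_prob_def sum.distrib[symmetric] by (intro sum.cong) auto
  then show ?thesis using subset_prob_True[OF assms] subset_prob_empty[OF assms] by simp
qed

lemma sum_Pow_Un_disjoint:
  assumes "finite X" "finite Y" "X \<inter> Y = {}"
  shows "(\<Sum>S\<in>Pow (X \<union> Y). g S) = (\<Sum>S\<in>Pow X. \<Sum>S'\<in>Pow Y. g (S \<union> S'))"
proof -
  have "bij_betw (\<lambda>(S, S'). S \<union> S') (Pow X \<times> Pow Y) (Pow (X \<union> Y))"
  proof (rule bij_betwI[where g = "\<lambda>S. (S \<inter> X, S \<inter> Y)"])
    show "(\<lambda>(S, S'). S \<union> S') \<in> Pow X \<times> Pow Y \<rightarrow> Pow (X \<union> Y)" by auto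
    show "(\<lambda>S. (S \<inter> X, S \<inter> Y)) \<in> Pow (X \<union> Y) \<rightarrow> Pow X \<times> Pow Y" by auto
    show "(\<lambda>S. (S \<inter> X, S \<inter> Y)) ((\<lambda>(S, S'). S \<union> S') p) = p" if "p \<in> Pow X \<times> Pow Y" for p
      using that assms(3) by auto
    show "(\<lambda>(S, S'). S \<union> S') (S \<inter> X, S \<inter> Y) = S" if "S \<in> Pow (X \<union> Y)" for S
      using that by auto
  qed
  then have "(\<Sum>S\<in>Pow (X \<union> Y). g S) = (\<Sum>(S, S')\<in>Pow X \<times> Pow Y. g (S \<union> S'))"
    by (subst sum.reindex_bij_betw[symmetric]) (auto simp: case_prod_unfold)
  then show ?thesis by (simp add: sum.cartesian_product)
qed

lemma subset_weight_Un:
  assumes "finite X" "finite Y" "X \<inter> Y = {}" "S \<subseteq> X" "S' \<subseteq> Y"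
  shows "subset_weight q (X \<union> Y) (S \<union> S') = subset_weight q X S * subset_weight q Y S'"
proof -
  have "card (S \<union> S') = card S + card S'"
    using assms by (intro card_Un_disjoint) (auto intro: finite_subset)
  moreover have "(X \<union> Y) - (S \<union> S') = (X - S) \<union> (Y - S')" using assms by blast
  moreover have "card ((X - S) \<union> (Y - S')) = card (X - S) + card (Y - S')"
    using assms by (intro card_Un_disjoint) auto
  ultimately show ?thesis by (simp add: subset_weight_def power_add algebra_simps)
qed

lemma subset_prob_Un_disjoint:
  assumes "finite X" "finite Y" "X \<inter> Y = {}"
  shows "subset_prob q (X \<union> Y) (\<lambda>S. E (S \<inter> X) \<and> F (S \<inter> Y)) = subset_prob q X E * subset_prob q Y F"
proof -
  have "subset_prob q (X \<union> Y) (\<lambda>S. E (S \<inter> X) \<and> F (S \<inter> Y))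
      = (\<Sum>S\<in>Pow X. \<Sum>S'\<in>Pow Y. (if E S then subset_weight q X S else 0) * (if F S' then subset_weight q Y S' else 0))"
    unfolding subset_prob_def sum_Pow_Un_disjoint[OF assms]
  proof (intro sum.cong refl)
    fix S S' assume "S \<in> Pow X" "S' \<in> Pow Y"
    moreover from this have "(S \<union> S') \<inter> X = S" "(S \<union> S') \<inter> Y = S'" using assms(3) by auto
    ultimately show "(if E ((S \<union> S') \<inter> X) \<and> F ((S \<union> S') \<inter> Y) then subset_weight q (X \<union> Y) (S \<union> S') else 0)
        = (if E S then subset_weight q X S else 0) * (if F S' then subset_weight q Y S' else 0)"
      using subset_weight_Un[OF assms] by simp
  qed
  then show ?thesis by (simp add: subset_prob_def sum_product)
qed

lemma subset_prob_restrict: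
  assumes "finite T" "X \<subseteq> T"
  shows "subset_prob q T (\<lambda>S. E (S \<inter> X)) = subset_prob q X E"
proof -
  have T: "T = X \<union> (T - X)" using assms(2) by blast
  have "subset_prob q T (\<lambda>S. E (S \<inter> X)) = subset_prob q (X \<union> (T - X)) (\<lambda>S. E (S \<inter> X) \<and> True)"
    by (subst T) simp
  also have "\<dots> = subset_prob q X E"
    using assms subset_prob_Un_disjoint[of X "T - X" q E "\<lambda>_. True"]
    by (simp add: subset_prob_True finite_subset)
  finally show ?thesis .
qed

lemma subset_prob_hits_all:
  assumes "finite K" "\<And>k. k \<in> K \<Longrightarrow> finite (C k)" "disjoint_family_on C K"
  shows "subset_prob q (\<Union>(C ` K)) (\<lambda>S. \<forall>k\<in>K. S \<inter> C k \<noteq> {}) = (\<Prod>k\<in>K. 1 - (1 - q) ^ card (C k))"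
  using assms
proof (induction K rule: finite_induct)
  case empty
  then show ?case by (simp add: subset_prob_True)
next
  case (insert k K)
  let ?Y = "\<Union>(C ` K)"
  have disj: "C k \<inter> ?Y = {}" and dfK: "disjoint_family_on C K"
    using insert.prems(2) insert.hyps(2) by (auto simp: disjoint_family_on_insert)
  have "subset_prob q (\<Union>(C ` insert k K)) (\<lambda>S. \<forall>j\<in>insert k K. S \<inter> C j \<noteq> {})
      = subset_prob q (C k \<union> ?Y) (\<lambda>S. S \<inter> C k \<noteq> {} \<and> (\<forall>j\<in>K. (S \<inter> ?Y) \<inter> C j \<noteq> {}))"
    by simp (intro subset_prob_cong; blast)
  also have "\<dots> = (1 - (1 - q) ^ card (C k)) * (\<Prod>j\<in>K. 1 - (1 - q) ^ card (C j))"
    using subset_prob_Un_disjoint[of "C k" ?Y q "\<lambda>S. S \<noteq> {}" "\<lambda>S. \<forall>j\<in>K. S \<inter> C j \<noteq> {}"]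
      insert disj dfK by (simp add: subset_prob_nonempty)
  finally show ?case using insert.hyps by simp
qed

lemma union_bound_subset_prob:
  assumes "finite T" "finite I" "0 \<le> q" "q \<le> 1" "\<And>S. S \<subseteq> T \<Longrightarrow> \<exists>i\<in>I. E i S"
  shows "1 \<le> (\<Sum>i\<in>I. subset_prob q T (E i))"
proof -
  have "(\<Sum>S\<in>Pow T. subset_weight q T S) \<le> (\<Sum>S\<in>Pow T. \<Sum>i\<in>I. if E i S then subset_weight q T S else 0)"
  proof (rule sum_mono)
    fix S assume "S \<in> Pow T"
    then obtain i where "i \<in> I" "E i S" using assms(5) by auto
    then show "subset_weight q T S \<le> (\<Sum>i\<in>I. if E i S then subset_weight q T S else 0)"
      using member_le_sum[of i I "\<lambda>i. if E i S then subset_weight q T S else 0"] assms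
      by (simp add: subset_weight_nonneg)
  qed
  then show ?thesis
    unfolding subset_prob_def by (subst sum.swap) (simp add: sum_subset_weight[OF assms(1)])
qed

definition down_closure :: "'a set \<Rightarrow> ('a \<Rightarrow> 'a \<Rightarrow> bool) \<Rightarrow> 'a set \<Rightarrow> 'a set" where
  "down_closure P le S = {y\<in>P. \<exists>x\<in>S. le y x}"

lemma downset_down_closure:
  assumes "partial_order_on' P le" "S \<subseteq> P"
  shows "downset P le (down_closure P le S)"
  using assms unfolding downset_def down_closure_def partial_order_on'_def by blast

lemma subset_down_closure: "\<forall>x\<in>P. le x x \<Longrightarrow> S \<subseteq> P \<Longrightarrow> S \<subseteq> down_closure P le S"
  unfolding down_closure_def by blast

lemma mem_down_closure_iff: "S \<subseteq> P \<Longrightarrow> a \<in> down_closure P le S \<longleftrightarrow> a \<in> P \<and> S \<inter> up P le a \<noteq> {}"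
  unfolding down_closure_def up_def by blast

text \<open>Every b in the set lies below one of the at most \<open>Mu\<close> elements above a.\<close>
lemma card_overlapping_up_le:
  assumes "finite P" "A \<subseteq> P" "a \<in> P"
    and down_le: "\<forall>c\<in>P. card (down P le c) \<le> Md" and up_le: "\<forall>c\<in>P. card (up P le c) \<le> Mu"
  shows "card {b\<in>A. up P le a \<inter> up P le b \<noteq> {}} \<le> Mu * Md"
proof -
  have "{b\<in>A. up P le a \<inter> up P le b \<noteq> {}} \<subseteq> (\<Union>c\<in>up P le a. down P le c)"
    using assms(2) by (auto simp: up_def down_def)
  then have "card {b\<in>A. up P le a \<inter> up P le b \<noteq> {}} \<le> card (\<Union>c\<in>up P le a. down P le c)"
    using assms(1) by (intro card_mono[OF finite_subset[of _ P]]) (auto simp: down_def)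
  also have "\<dots> \<le> (\<Sum>c\<in>up P le a. card (down P le c))"
    using assms(1) by (intro card_UN_le) (simp add: up_def)
  also have "\<dots> \<le> card (up P le a) * Md"
    using sum_bounded_above[of "up P le a" "\<lambda>c. card (down P le c)" Md] down_le
    by (auto simp: up_def)
  also have "\<dots> \<le> Mu * Md"
    using up_le assms(3) by (intro mult_right_mono) auto
  finally show ?thesis .
qed

lemma obtain_disjoint_up_subset:
  assumes "finite P" "\<forall>x\<in>P. le x x" "A \<subseteq> P"
    and "\<forall>c\<in>P. card (down P le c) \<le> Md" "\<forall>c\<in>P. card (up P le c) \<le> Mu"
  obtains A' where "A' \<subseteq> A" "disjoint_family_on (up P le) A'" "card A \<le> Mu * Md * card A'"
proof -
  have "finite A" using assms(1,3) finite_subset by blast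
  then have "\<exists>A'\<subseteq>A. disjoint_family_on (up P le) A' \<and> card A \<le> Mu * Md * card A'"
    using assms(3)
  proof (induction A rule: finite_psubset_induct)
    case (psubset A)
    show ?case
    proof (cases "A = {}")
      case True
      then show ?thesis by (auto simp: disjoint_family_on_def)
    next
      case False
      then obtain a where a: "a \<in> A" by auto
      define N where "N = {b\<in>A. up P le a \<inter> up P le b \<noteq> {}}"
      have "a \<in> N" using a psubset.prems assms(2) by (auto simp: N_def up_def)
      have "N \<subseteq> A" by (auto simp: N_def)
      have card_N: "card N \<le> Mu * Md"
        unfolding N_def using assms a psubset.prems by (intro card_overlapping_up_le) auto
      obtain A'' where A'': "A'' \<subseteq> A - N" "disjoint_family_on (up P le) A''"
          "card (A - N) \<le> Mu * Md * card A''"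
        using psubset.IH[of "A - N"] psubset.prems \<open>a \<in> N\<close> \<open>N \<subseteq> A\<close> by blast
      have "a \<notin> A''" "finite A''"
        using A''(1) \<open>a \<in> N\<close> psubset.hyps finite_subset by auto
      have "card A = card N + card (A - N)"
        using \<open>N \<subseteq> A\<close> psubset.hyps card_Diff_subset[of N A] card_mono[of A N]
        by (simp add: finite_subset)
      then have "card A \<le> Mu * Md * card (insert a A'')"
        using card_N A''(3) \<open>a \<notin> A''\<close> \<open>finite A''\<close> by simp
      moreover have "disjoint_family_on (up P le) (insert a A'')"
        using A''(1,2) \<open>a \<notin> A''\<close> by (auto simp: disjoint_family_on_insert N_def)
      ultimately show ?thesis using A''(1) a by (intro exI[of _ "insert a A''"]) auto
    qed
  qed
  then show ?thesis using that by blast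
qed

lemma quarter_le_power_one_minus_inverse:
  assumes "k < m"
  shows "1/4 \<le> (1 - 1 / real m) ^ k"
proof -
  obtain j where j: "m = Suc j" using assms by (cases m) auto
  have base: "0 \<le> 1 - 1 / real m" "1 - 1 / real m \<le> 1" using j by (auto simp: field_simps)
  show ?thesis
  proof (cases "j = 0")
    case True
    then show ?thesis using assms j by simp
  next
    case False
    \<comment> \<open>\<open>1 - 1/m = 1 / (1 + 1/j)\<close> and \<open>(1 + 1/j)^j \<le> e \<le> 4\<close>\<close>
    have "(1 + 1 / real j) ^ j \<le> exp 1"
      using exp_ge_one_plus_x_over_n_power_n[of j 1] False by simp
    also have "\<dots> \<le> 4" using exp_le by simp
    finally have "(1 + 1 / real j) ^ j \<le> 4" .
    moreover have "(1 - 1 / real m) ^ j = 1 / (1 + 1 / real j) ^ j"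
      using False j by (simp add: field_simps)
    moreover have "0 < (1 + 1 / real j) ^ j" by (intro zero_less_power) (simp add: add_pos_nonneg)
    ultimately have "1/4 \<le> (1 - 1 / real m) ^ j"
      by (simp add: le_divide_eq)
    also have "\<dots> \<le> (1 - 1 / real m) ^ k"
      using power_decreasing[OF _ base] assms j by simp
    finally show ?thesis .
  qed
qed

lemma card_down_up_ge_one:
  assumes "finite P" "\<forall>x\<in>P. le x x" "p \<in> P"
  shows "1 \<le> card (down P le p)" "1 \<le> card (up P le p)"
  using assms by (auto simp: Suc_le_eq card_gt_0_iff down_def up_def)

lemma one_over_of_nat_le_one: "1 / real m \<le> 1"
  by (cases m) simp_all

lemma subset_prob_covered_le:
  assumes "finite P" and reflexive: "\<forall>x\<in>P. le x x" and "A \<subseteq> P"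
    and m: "\<forall>p\<in>P. card (down P le p) + card (up P le p) \<le> m"
  shows "subset_prob (1 / real m) P (\<lambda>S. A \<subseteq> down_closure P le S)
           \<le> (3/4) powr (real (card A) / real m ^ 2)"
proof -
  define q where "q = 1 / real m"
  have q: "0 \<le> q" "q \<le> 1" by (simp_all add: q_def one_over_of_nat_le_one)
  have up_lt: "card (up P le p) < m" if "p \<in> P" for p
    using m card_down_up_ge_one[of P le p] assms(1) reflexive that by fastforce
  have "\<forall>c\<in>P. card (down P le c) \<le> m" "\<forall>c\<in>P. card (up P le c) \<le> m"
    using m by fastforce+
  then obtain A' where A': "A' \<subseteq> A" "disjoint_family_on (up P le) A'" "card A \<le> m * m * card A'"
    using obtain_disjoint_up_subset[of P le A m m, OF assms(1) reflexive assms(3)] by blast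
  define U where "U = \<Union>(up P le ` A')"
  have "finite A'" using A'(1) assms(1,3) by (meson finite_subset subset_trans)
  have "U \<subseteq> P" by (auto simp: U_def up_def)
  have "subset_prob q P (\<lambda>S. A \<subseteq> down_closure P le S)
      \<le> subset_prob q P (\<lambda>S. \<forall>a\<in>A'. S \<inter> U \<inter> up P le a \<noteq> {})"
  proof (intro subset_prob_mono q)
    fix S assume S: "S \<subseteq> P" "A \<subseteq> down_closure P le S"
    show "\<forall>a\<in>A'. S \<inter> U \<inter> up P le a \<noteq> {}"
    proof
      fix a assume "a \<in> A'"
      then have "S \<inter> up P le a \<noteq> {}" using A'(1) S mem_down_closure_iff[of S P a le] by blast
      moreover have "up P le a \<subseteq> U" using \<open>a \<in> A'\<close> by (auto simp: U_def)
      ultimately show "S \<inter> U \<inter> up P le a \<noteq> {}" by blast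
    qed
  qed
  also have "\<dots> = subset_prob q U (\<lambda>S. \<forall>a\<in>A'. S \<inter> up P le a \<noteq> {})"
    using subset_prob_restrict[OF assms(1) \<open>U \<subseteq> P\<close>, of q "\<lambda>S. \<forall>a\<in>A'. S \<inter> up P le a \<noteq> {}"] by simp
  also have "\<dots> = (\<Prod>a\<in>A'. 1 - (1 - q) ^ card (up P le a))"
    unfolding U_def using \<open>finite A'\<close> A'(2) assms(1)
    by (intro subset_prob_hits_all) (auto simp: up_def)
  also have "\<dots> \<le> (\<Prod>a\<in>A'. 3/4)"
  proof (rule prod_mono)
    fix a assume "a \<in> A'"
    then have "1/4 \<le> (1 - q) ^ card (up P le a)"
      unfolding q_def using A'(1) assms(3) by (intro quarter_le_power_one_minus_inverse up_lt) auto
    moreover have "(1 - q) ^ card (up P le a) \<le> 1" using q by (simp add: power_le_one)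
    ultimately show "0 \<le> 1 - (1 - q) ^ card (up P le a) \<and> 1 - (1 - q) ^ card (up P le a) \<le> 3/4"
      by simp
  qed
  also have "\<dots> = (3/4) powr real (card A')" by (simp add: powr_realpow)
  also have "\<dots> \<le> (3/4) powr (real (card A) / real m ^ 2)"
  proof (rule powr_mono')
    have "real (card A) \<le> real m ^ 2 * real (card A')"
      using A'(3) by (simp add: power2_eq_square flip: of_nat_mult)
    then show "real (card A) / real m ^ 2 \<le> real (card A')"
      by (cases "m = 0") (simp_all add: divide_le_eq mult.commute)
  qed auto
  finally show ?thesis unfolding q_def .
qed

lemma subset_prob_down_closure_subset_le:
  assumes "finite P" and reflexive: "\<forall>x\<in>P. le x x" and "B \<subseteq> P"
  shows "subset_prob (1 / real m) P (\<lambda>S. down_closure P le S \<subseteq> B)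
           \<le> exp (- (real (card P) - real (card B)) / real m)"
proof -
  define q where "q = 1 / real m"
  have q: "0 \<le> q" "q \<le> 1" by (simp_all add: q_def one_over_of_nat_le_one)
  have "subset_prob q P (\<lambda>S. down_closure P le S \<subseteq> B) \<le> subset_prob q P (\<lambda>S. S \<inter> (P - B) = {})"
  proof (intro subset_prob_mono q)
    fix S assume "S \<subseteq> P" "down_closure P le S \<subseteq> B"
    then show "S \<inter> (P - B) = {}" using subset_down_closure[of P le S] reflexive by blast
  qed
  also have "\<dots> = (1 - q) ^ card (P - B)"
    using subset_prob_restrict[of P "P - B" q "\<lambda>S. S = {}"] subset_prob_empty[of "P - B" q] assms(1)
    by simp
  also have "\<dots> \<le> exp (- q) ^ card (P - B)"
    using q by (intro power_mono) (auto simp: exp_ge_add_one_self[of "- q", simplified])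
  also have "\<dots> = exp (- (real (card P) - real (card B)) / real m)"
  proof -
    have card_eq: "real (card (P - B)) = real (card P) - real (card B)"
      using assms(1,3) by (simp add: card_Diff_subset card_mono finite_subset)
    have "exp (- q) ^ card (P - B) = exp (real (card (P - B)) * - q)"
      by (simp flip: exp_of_nat_mult)
    then show ?thesis unfolding card_eq q_def by (simp add: diff_divide_distrib)
  qed
  finally show ?thesis unfolding q_def .
qed

theorem lemma4:
  fixes P :: "'a set" and le :: "'a \<Rightarrow> 'a \<Rightarrow> bool"
    and \<A> \<B> :: "'a set set" and n m :: nat
  assumes "finite P" and "P \<noteq> {}" and "partial_order_on' P le"
    and "n = card P"
    and "m = Max ((\<lambda>p. card (down P le p) + card (up P le p)) ` P)"
    and "dual_families P le \<A> \<B>"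
  shows "(\<Sum>A\<in>\<A>. (3/4::real) powr (real (card A) / real m ^ 2))
         + (\<Sum>B\<in>\<B>. exp (- (real n - real (card B)) / real m)) \<ge> 1"
proof -
  have reflexive: "\<forall>x\<in>P. le x x" using assms(3) by (simp add: partial_order_on'_def)
  have m: "\<forall>p\<in>P. card (down P le p) + card (up P le p) \<le> m"
    using assms(1,5) by simp
  have "\<A> \<subseteq> Pow P" "\<B> \<subseteq> Pow P"
    using assms(6) by (auto simp: dual_families_def downset_def)
  then have fin: "finite \<A>" "finite \<B>" using assms(1) finite_subset by blast+
  let ?E = "case_sum (\<lambda>A S. A \<subseteq> down_closure P le S) (\<lambda>B S. down_closure P le S \<subseteq> B)"
  have "\<exists>i\<in>\<A> <+> \<B>. ?E i S" if "S \<subseteq> P" for S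
  proof -
    have "(\<exists>B\<in>\<B>. down_closure P le S \<subseteq> B) \<or> (\<exists>A\<in>\<A>. A \<subseteq> down_closure P le S)"
      using assms(6) downset_down_closure[OF assms(3) that] by (simp add: dual_families_def)
    then show ?thesis by (metis InlI InrI sum.case)
  qed
  then have "1 \<le> (\<Sum>i\<in>\<A> <+> \<B>. subset_prob (1 / real m) P (?E i))"
    using assms(1) fin by (intro union_bound_subset_prob) (simp_all add: one_over_of_nat_le_one)
  also have "\<dots> = (\<Sum>A\<in>\<A>. subset_prob (1 / real m) P (\<lambda>S. A \<subseteq> down_closure P le S))
      + (\<Sum>B\<in>\<B>. subset_prob (1 / real m) P (\<lambda>S. down_closure P le S \<subseteq> B))"
    using fin by (simp add: sum.Plus comp_def)
  also have "\<dots> \<le> (\<Sum>A\<in>\<A>. (3/4::real) powr (real (card A) / real m ^ 2))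
         + (\<Sum>B\<in>\<B>. exp (- (real n - real (card B)) / real m))"
    unfolding assms(4) using assms(1) reflexive m \<open>\<A> \<subseteq> Pow P\<close> \<open>\<B> \<subseteq> Pow P\<close>
    by (intro add_mono sum_mono subset_prob_covered_le subset_prob_down_closure_subset_le; blast)
  finally show ?thesis .
qed

end
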